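(* For every integer $k\geq 1$ there exist $n$ and a covering $k$-colouring of the edges of $K_n^{(3)}$ with no tricoloured $4$-set.
   Context: $K_n^{(3)}$ is the complete $3$-uniform hypergraph on $n$ vertices (edges are all $3$-subsets). A $3$-uniform hypergraph on vertex set $V$ is a covering if every $2$-subset of $V$ is contained in some edge. A $k$-colouring of the edges of $K_n^{(3)}$ is covering if for each colour, the $3$-graph on all $n$ vertices formed by the edges of that colour is a covering. A $4$-set of vertices is tricoloured if its four $3$-subsets receive exactly three distinct colours. *)

theory Defs
  imports Main
begin

definition edges3 :: "nat \<Rightarrow> nat set set" where
  "edges3 n = {e. e \<subseteq> {..<n} \<and> card e = 3}"

definition is_colouring :: "nat \<Rightarrow> nat \<Rightarrow> (nat set \<Rightarrow> nat) \<Rightarrow> bool" where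
  "is_colouring n k c \<longleftrightarrow> (\<forall>e\<in>edges3 n. c e < k)"

definition is_covering :: "nat set \<Rightarrow> nat set set \<Rightarrow> bool" where
  "is_covering V H \<longleftrightarrow> (\<forall>p. p \<subseteq> V \<and> card p = 2 \<longrightarrow> (\<exists>e\<in>H. p \<subseteq> e))"

definition covering_colouring :: "nat \<Rightarrow> nat \<Rightarrow> (nat set \<Rightarrow> nat) \<Rightarrow> bool" where
  "covering_colouring n k c \<longleftrightarrow> is_colouring n k c \<and>
     (\<forall>i<k. is_covering {..<n} {e\<in>edges3 n. c e = i})"

definition tricoloured :: "(nat set \<Rightarrow> nat) \<Rightarrow> nat set \<Rightarrow> bool" where
  "tricoloured c S \<longleftrightarrow> card (c ` {e. e \<subseteq> S \<and> card e = 3}) = 3"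

end

theory Submission
  imports Defs
begin

text \<open>Take the numbers below \<open>2^N\<close>, \<open>N = 2^k\<close>, as vertices and let the level of two distinct
vertices be the position of the highest bit in which they differ. Levels form an ultrametric in
which every triangle is isosceles but, bits taking only two values, never equilateral: a triple
sees exactly two levels \<open>a < b\<close>, and it is coloured by the level of the pair \<open>(a, b)\<close>, which is
below \<open>k\<close>. An \<open>m\<close>-set of vertices sees at most \<open>m - 1\<close> levels, so a 4-set sees at most three
levels and its triples get at most two colours. For covering, given a pair \<open>x, y\<close> at level \<open>d\<close>
and a colour \<open>i\<close>, take \<open>j\<close> at level \<open>i\<close> from \<open>d\<close> and then \<open>z\<close> at level \<open>j\<close> from \<open>x\<close>.\<close>

lemma div_pow2_eq_mono:
  fixes x y :: nat
  assumes "x div 2 ^ j = y div 2 ^ j" "j \<le> l"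
  shows "x div 2 ^ l = y div 2 ^ l"
proof -
  obtain m where "l = j + m" using assms(2) le_Suc_ex by blast
  then show ?thesis using assms(1) by (simp add: power_add div_mult2_eq)
qed

lemma div_pow2_Suc: "(x::nat) div 2 ^ Suc j = x div 2 ^ j div 2"
  by (metis div_mult2_eq power_Suc2)

lemma less_pow2_if_div_pow2_eq:
  fixes x y :: nat
  assumes "x div 2 ^ j = y div 2 ^ j" "j \<le> l" "x < 2 ^ l"
  shows "y < 2 ^ l"
  using div_pow2_eq_mono[OF assms(1,2)] assms(3) by (simp add: div_eq_0_iff)

text \<open>Note that \<open>split_level x x = 0\<close>, the same value as for two numbers differing only in bit 0.\<close>

definition split_level :: "nat \<Rightarrow> nat \<Rightarrow> nat" where
  "split_level x y = (LEAST j. x div 2 ^ Suc j = y div 2 ^ Suc j)"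

lemma split_level_exists: "\<exists>j. (x::nat) div 2 ^ Suc j = y div 2 ^ Suc j"
proof -
  have "x < 2 ^ Suc (x + y)" "y < 2 ^ Suc (x + y)"
    using less_exp[of "Suc (x + y)"] by linarith+
  then show ?thesis by (intro exI[of _ "x + y"]) simp
qed

lemma div_pow2_eq_iff_split_level:
  "x div 2 ^ j = y div 2 ^ j \<longleftrightarrow> x = y \<or> split_level x y < j"
proof (cases j)
  case (Suc m)
  have least: "x div 2 ^ Suc (split_level x y) = y div 2 ^ Suc (split_level x y)"
    unfolding split_level_def by (rule LeastI_ex[OF split_level_exists])
  show ?thesis
  proof
    assume "x div 2 ^ j = y div 2 ^ j"
    then have "split_level x y \<le> m" unfolding split_level_def using Suc by (intro Least_le) simp
    then show "x = y \<or> split_level x y < j" using Suc by simp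
  next
    assume "x = y \<or> split_level x y < j"
    then show "x div 2 ^ j = y div 2 ^ j"
      using div_pow2_eq_mono[OF least, of j] by auto
  qed
qed simp

lemma split_level_commute: "split_level x y = split_level y x"
  unfolding split_level_def by (simp add: eq_commute)

lemma split_level_self [simp]: "split_level x x = 0"
  unfolding split_level_def by simp

lemma split_level_ultrametric: "split_level x z \<le> max (split_level x y) (split_level y z)"
proof -
  let ?j = "Suc (max (split_level x y) (split_level y z))"
  have "split_level x y < ?j" "split_level y z < ?j" by simp_all
  then have "x div 2 ^ ?j = y div 2 ^ ?j" "y div 2 ^ ?j = z div 2 ^ ?j"
    using div_pow2_eq_iff_split_level by blast+
  then have "x = z \<or> split_level x z < ?j"
    using div_pow2_eq_iff_split_level[of x ?j z] by simp
  then show ?thesis by auto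
qed

lemma split_level_isosceles:
  assumes "split_level x y \<noteq> split_level x z"
  shows "split_level y z = max (split_level x y) (split_level x z)"
proof -
  have "split_level y z \<le> max (split_level x y) (split_level x z)"
    "split_level x y \<le> max (split_level x z) (split_level y z)"
    "split_level x z \<le> max (split_level x y) (split_level y z)"
    by (metis split_level_ultrametric split_level_commute)+
  then show ?thesis using assms by (auto simp: max_def split: if_splits)
qed

lemma split_level_less:
  assumes "x < 2 ^ m" "y < 2 ^ m" "0 < m"
  shows "split_level x y < m"
  using assms div_pow2_eq_iff_split_level[of x m y] by auto

lemma split_level_eqI:
  assumes "x div 2 ^ j \<noteq> y div 2 ^ j" "x div 2 ^ Suc j = y div 2 ^ Suc j"
  shows "split_level x y = j"
  using assms div_pow2_eq_iff_split_level[of x j y] div_pow2_eq_iff_split_level[of x "Suc j" y]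
  by auto

text \<open>At level \<open>d\<close> the two numbers agree above bit \<open>d\<close> and differ in bit \<open>d\<close>; three pairwise
distinct numbers cannot pairwise differ in a single bit.\<close>

lemma split_level_not_equilateral:
  assumes "x \<noteq> y" "y \<noteq> z" "x \<noteq> z"
    and "split_level x y = split_level y z" "split_level x z = split_level y z"
  shows False
proof -
  let ?d = "split_level x y"
  have bit_differs: "u div 2 ^ ?d mod 2 \<noteq> v div 2 ^ ?d mod 2"
    if "u \<noteq> v" "split_level u v = ?d" for u v :: nat
  proof -
    have "u div 2 ^ ?d \<noteq> v div 2 ^ ?d" "u div 2 ^ ?d div 2 = v div 2 ^ ?d div 2"
      using that div_pow2_eq_iff_split_level[of u ?d v]
        div_pow2_eq_iff_split_level[of u "Suc ?d" v]
      unfolding div_pow2_Suc by auto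
    then show ?thesis by (metis div_mult_mod_eq)
  qed
  have "x div 2 ^ ?d mod 2 \<noteq> y div 2 ^ ?d mod 2" "y div 2 ^ ?d mod 2 \<noteq> z div 2 ^ ?d mod 2"
    "x div 2 ^ ?d mod 2 \<noteq> z div 2 ^ ?d mod 2"
    using bit_differs assms by auto
  then show False by linarith
qed

text \<open>Flip bit \<open>j\<close> of \<open>x\<close>.\<close>

lemma exists_split_level_eq:
  "\<exists>z. z \<noteq> x \<and> split_level x z = j \<and> x div 2 ^ Suc j = z div 2 ^ Suc j"
proof -
  define q where "q = x div 2 ^ Suc j"
  define b where "b = x div 2 ^ j mod 2"
  define z where "z = (2 * q + (1 - b)) * 2 ^ j + x mod 2 ^ j"
  have x_div: "x div 2 ^ j = 2 * q + b"
    unfolding q_def b_def div_pow2_Suc by simp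
  have z_div: "z div 2 ^ j = 2 * q + (1 - b)"
    unfolding z_def by simp
  have "b = 0 \<or> b = 1" unfolding b_def by auto
  then have "x div 2 ^ j \<noteq> z div 2 ^ j" "x div 2 ^ Suc j = z div 2 ^ Suc j"
    unfolding div_pow2_Suc x_div z_div by auto
  then show ?thesis using split_level_eqI by metis
qed

definition levels :: "nat set \<Rightarrow> nat set" where
  "levels A = {split_level x y | x y. x \<in> A \<and> y \<in> A \<and> x \<noteq> y}"

lemma finite_levels: "finite A \<Longrightarrow> finite (levels A)"
proof -
  assume "finite A"
  have "levels A \<subseteq> case_prod split_level ` (A \<times> A)" unfolding levels_def by auto
  then show ?thesis using \<open>finite A\<close> finite_subset by blast
qed

lemma levelsI: "x \<in> A \<Longrightarrow> y \<in> A \<Longrightarrow> x \<noteq> y \<Longrightarrow> split_level x y \<in> levels A"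
  unfolding levels_def by blast

lemma levels_mono: "A \<subseteq> B \<Longrightarrow> levels A \<subseteq> levels B"
  unfolding levels_def by blast

lemma levels_triple:
  assumes "x \<noteq> y" "y \<noteq> z" "x \<noteq> z"
  shows "levels {x, y, z} = {split_level x y, split_level y z, split_level x z}"
  unfolding levels_def using assms split_level_commute by auto

text \<open>A new point \<open>x\<close> adds at most the level to its nearest point \<open>a\<close>: every farther point \<open>v\<close>
is, by the isosceles property, at the same level from \<open>a\<close> as from \<open>x\<close>.\<close>

lemma levels_insert_subset:
  assumes "finite A" "A \<noteq> {}"
  shows "\<exists>l. levels (insert x A) \<subseteq> insert l (levels A)"
proof -
  obtain a where a: "a \<in> A" "\<And>v. v \<in> A \<Longrightarrow> split_level x a \<le> split_level x v"
    using ex_min_if_finite[of "split_level x ` A"] assms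
    by (metis (no_types, lifting) arg_min_if_finite(1,2) leI)
  have near: "split_level x v \<in> insert (split_level x a) (levels A)" if "v \<in> A" for v
  proof (cases "split_level x v = split_level x a")
    case False
    then have "split_level a v = split_level x v"
      using split_level_isosceles[of x a v] a(2)[OF that] by simp
    moreover have "a \<noteq> v" using False by auto
    ultimately show ?thesis using levelsI[OF a(1) that] by simp
  qed simp
  have "split_level u v \<in> insert (split_level x a) (levels A)"
    if "u \<in> insert x A" "v \<in> insert x A" "u \<noteq> v" for u v
    using that near[of u] near[of v] levelsI[of u A v] split_level_commute[of u x] by auto
  then show ?thesis unfolding levels_def by blast
qed

lemma card_levels_le: "finite A \<Longrightarrow> card (levels A) \<le> card A - 1"
proof (induction A rule: finite_induct)
  case empty
  then show ?case by (simp add: levels_def)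
next
  case (insert x A)
  show ?case
  proof (cases "A = {}")
    case True
    then show ?thesis by (simp add: levels_def)
  next
    case False
    obtain l where "levels (insert x A) \<subseteq> insert l (levels A)"
      using levels_insert_subset[OF insert(1) False] by blast
    then have "card (levels (insert x A)) \<le> card (insert l (levels A))"
      by (intro card_mono) (simp_all add: finite_levels insert(1))
    also have "\<dots> \<le> card (levels A) + 1"
      by (simp add: card_insert_if finite_levels insert(1))
    also have "\<dots> \<le> card A"
      using insert(3) False insert(1) card_gt_0_iff[of A] by linarith
    finally show ?thesis using insert(1,2) by simp
  qed
qed

definition triple_colour :: "nat set \<Rightarrow> nat" where
  "triple_colour T = split_level (Min (levels T)) (Max (levels T))"

lemma levels_card_3:
  assumes "card T = 3"
  shows "\<exists>a b. a < b \<and> levels T = {a, b}"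
proof -
  obtain x y z where T: "T = {x, y, z}" "x \<noteq> y" "y \<noteq> z" "x \<noteq> z"
    using assms card_3_iff by metis
  have L: "levels T = {split_level x y, split_level y z, split_level x z}"
    using T levels_triple by simp
  have "\<exists>a b. a \<noteq> b \<and> levels T = {a, b}"
  proof (cases "split_level x y = split_level x z")
    case True
    then have "split_level y z \<noteq> split_level x y"
      using split_level_not_equilateral[OF T(2-4)] by auto
    then show ?thesis using L True by auto
  next
    case False
    then show ?thesis using L split_level_isosceles[OF False] by (auto simp: max_def)
  qed
  then show ?thesis by (metis insert_commute linorder_neqE_nat)
qed

lemma triple_colour_eq:
  assumes "levels T = {a, b}"
  shows "triple_colour T = split_level a b"
  using assms split_level_commute[of a b]
  by (cases "a \<le> b") (simp_all add: triple_colour_def min_def max_def)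

lemma triple_colour_mem_levels_levels:
  assumes "T \<subseteq> S" "card T = 3"
  shows "triple_colour T \<in> levels (levels S)"
proof -
  obtain a b where "a < b" "levels T = {a, b}"
    using levels_card_3[OF assms(2)] by blast
  moreover have "levels T \<subseteq> levels S" using levels_mono[OF assms(1)] .
  ultimately show ?thesis using triple_colour_eq levelsI[of a "levels S" b] by simp
qed

lemma not_tricoloured_triple_colour:
  assumes "finite S" "card S = 4"
  shows "\<not> tricoloured triple_colour S"
proof -
  have "card (triple_colour ` {T. T \<subseteq> S \<and> card T = 3}) \<le> card (levels (levels S))"
    using triple_colour_mem_levels_levels
    by (intro card_mono finite_levels assms(1)) blast+
  also have "\<dots> \<le> card (levels S) - 1"
    by (rule card_levels_le[OF finite_levels[OF assms(1)]])
  also have "\<dots> \<le> 2"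
    using card_levels_le[OF assms(1)] assms(2) by simp
  finally show ?thesis unfolding tricoloured_def by simp
qed

lemma triple_colour_less:
  assumes "T \<subseteq> {..<2 ^ 2 ^ k}" "card T = 3" "0 < k"
  shows "triple_colour T < k"
proof -
  obtain a b where ab: "levels T = {a, b}"
    using levels_card_3[OF assms(2)] by blast
  have "levels T \<subseteq> {..<2 ^ k}"
    using assms(1) split_level_less[of _ "2 ^ k"] unfolding levels_def by auto
  then show ?thesis using ab triple_colour_eq split_level_less assms(3) by simp
qed

lemma exists_triple_colour:
  assumes "x \<noteq> y" "x < 2 ^ 2 ^ k" "y < 2 ^ 2 ^ k" "i < k"
  shows "\<exists>z < 2 ^ 2 ^ k. z \<noteq> x \<and> z \<noteq> y \<and> triple_colour {x, y, z} = i"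
proof -
  define d where "d = split_level x y"
  have "d < 2 ^ k" unfolding d_def using split_level_less assms(2,3) by simp
  obtain j where j: "j \<noteq> d" "split_level d j = i" "d div 2 ^ Suc i = j div 2 ^ Suc i"
    using exists_split_level_eq[of d i] by metis
  have "j < 2 ^ k"
    using less_pow2_if_div_pow2_eq[OF j(3) _ \<open>d < 2 ^ k\<close>] assms(4) by simp
  obtain z where z: "z \<noteq> x" "split_level x z = j" "x div 2 ^ Suc j = z div 2 ^ Suc j"
    using exists_split_level_eq[of x j] by metis
  have "z < 2 ^ 2 ^ k"
    using less_pow2_if_div_pow2_eq[OF z(3) _ assms(2)] \<open>j < 2 ^ k\<close> by simp
  have "z \<noteq> y" using z(2) j(1) d_def by auto
  have "split_level y z = max d j"
    using split_level_isosceles[of x y z] z(2) j(1) d_def by simp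
  then have "levels {x, y, z} = {d, j}"
    using levels_triple[OF assms(1) \<open>z \<noteq> y\<close>[symmetric] z(1)[symmetric]] z(2) d_def
    by (auto simp: max_def)
  then have "triple_colour {x, y, z} = i"
    using triple_colour_eq j(2) by simp
  then show ?thesis using \<open>z < 2 ^ 2 ^ k\<close> z(1) \<open>z \<noteq> y\<close> by blast
qed

lemma covering_colouring_triple_colour:
  assumes "0 < k"
  shows "covering_colouring (2 ^ 2 ^ k) k triple_colour"
proof -
  let ?n = "2 ^ 2 ^ k :: nat"
  have "is_covering {..<?n} {e \<in> edges3 ?n. triple_colour e = i}" if i: "i < k" for i
    unfolding is_covering_def
  proof (intro allI impI)
    fix p assume "p \<subseteq> {..<?n} \<and> card p = 2"
    then obtain x y where xy: "p = {x, y}" "x \<noteq> y" "x < ?n" "y < ?n"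
      by (auto simp: card_2_iff)
    then obtain z where "z < ?n" "z \<noteq> x" "z \<noteq> y" "triple_colour {x, y, z} = i"
      using exists_triple_colour[OF xy(2-4) i] by blast
    then have "{x, y, z} \<in> {e \<in> edges3 ?n. triple_colour e = i}"
      using xy by (simp add: edges3_def)
    then show "\<exists>e\<in>{e \<in> edges3 ?n. triple_colour e = i}. p \<subseteq> e"
      using xy(1) by blast
  qed
  then show ?thesis
    using triple_colour_less assms
    by (auto simp: covering_colouring_def is_colouring_def edges3_def)
qed

theorem lemma11:
  fixes k :: nat
  assumes "k \<ge> 1"
  shows "\<exists>n c. n \<ge> 3 \<and> covering_colouring n k c \<and>
           (\<forall>S. S \<subseteq> {..<n} \<and> card S = 4 \<longrightarrow> \<not> tricoloured c S)"
proof (intro exI conjI allI impI)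
  have "(2::nat) ^ 2 \<le> 2 ^ 2 ^ k"
    using assms by (intro power_increasing) (simp_all add: Suc_le_eq le_trans[OF _ self_le_power])
  then show "2 ^ 2 ^ k \<ge> (3::nat)" by simp
  show "covering_colouring (2 ^ 2 ^ k) k triple_colour"
    using assms by (intro covering_colouring_triple_colour) simp
  fix S :: "nat set" assume "S \<subseteq> {..<2 ^ 2 ^ k} \<and> card S = 4"
  then show "\<not> tricoloured triple_colour S"
    using not_tricoloured_triple_colour finite_subset by blast
qed

end
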